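(* Consider the linear model $\mathbf{y}=\alpha\mathbf{1}_n+\mathbf{X}\boldsymbol{\beta}+\sigma\boldsymbol{\epsilon}$, where the error vector $\boldsymbol{\epsilon}$ has a spherically symmetric density $f(\boldsymbol{\epsilon}'\boldsymbol{\epsilon})$ on $\mathbb{R}^n$ with $E[\boldsymbol{\epsilon}]=\mathbf{0}_n$ and $\mathrm{Var}[\boldsymbol{\epsilon}]=\mathbf{I}_n$. Let $\pi(\alpha,\boldsymbol{\beta})$ be a nonnegative (possibly improper) prior density on $(\alpha,\boldsymbol{\beta})\in\mathbb{R}\times\mathbb{R}^p$ and consider the joint (generalized) prior $\pi(\alpha,\boldsymbol{\beta},\sigma^2)=\pi(\alpha,\boldsymbol{\beta})\{\sigma^2\}^{-1}$. Then the generalized Bayes estimator of $\sigma^2$ with respect to this prior under Stein's loss $L_S(\delta,\sigma^2)=\delta/\sigma^2-\log(\delta/\sigma^2)-1$ does not depend on the particular spherically symmetric density $f$; in particular it coincides with the generalized Bayes estimator obtained when $\boldsymbol{\epsilon}\sim N_n(\mathbf{0}_n,\mathbf{I}_n)$.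
   Context: Here $\mathbf{y}\in\mathbb{R}^n$ is observed, $\alpha\in\mathbb{R}$ is an unknown intercept, $\mathbf{1}_n$ is the $n$-vector of ones, $\mathbf{X}=(\mathbf{x}_1,\dots,\mathbf{x}_p)$ is a known $n\times p$ design matrix whose columns are centered ($\mathbf{x}_i'\mathbf{1}_n=0$) and linearly independent (rank $p$), $n>p+1$, $\boldsymbol{\beta}\in\mathbb{R}^p$ is unknown, and $\sigma>0$ is unknown. The generalized Bayes estimator under Stein's loss is the estimator minimizing the (generalized) posterior expected loss, namely $\{E[1/\sigma^2\mid\mathbf{y}]\}^{-1}$, where the posterior is formed from the likelihood $\sigma^{-n}f(\|\mathbf{y}-\alpha\mathbf{1}_n-\mathbf{X}\boldsymbol{\beta}\|^2/\sigma^2)$ and the given prior (assumed to yield finite posterior quantities). *)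

theory Defs
  imports "HOL-Analysis.Analysis"
begin

definition spherical_error_density :: "(real \<Rightarrow> real) \<Rightarrow> ('n::finite) itself \<Rightarrow> bool" where
  "spherical_error_density f TYPE('n) \<longleftrightarrow>
     f \<in> borel_measurable borel \<and>
     (\<forall>t\<ge>0. 0 \<le> f t) \<and>
     integrable lborel (\<lambda>e::real^'n. f (e \<bullet> e)) \<and>
     (\<integral>e. f (e \<bullet> e) \<partial>(lborel :: (real^'n) measure)) = 1 \<and>
     integrable lborel (\<lambda>e::real^'n. f (e \<bullet> e) *\<^sub>R e) \<and>
     (\<integral>e. f (e \<bullet> e) *\<^sub>R e \<partial>(lborel :: (real^'n) measure)) = 0 \<and>
     (\<forall>i j. integrable lborel (\<lambda>e::real^'n. e $ i * e $ j * f (e \<bullet> e)) \<and>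
            (\<integral>e. e $ i * e $ j * f (e \<bullet> e) \<partial>(lborel :: (real^'n) measure))
              = (if i = j then 1 else 0))"

definition normal_generator :: "('n::finite) itself \<Rightarrow> real \<Rightarrow> real" where
  "normal_generator _ t = (2 * pi) powr (- real CARD('n) / 2) * exp (- t / 2)"

text \<open>Unnormalised generalized posterior density of (alpha, beta, s) with s = sigma^2:
  likelihood sigma^(-n) f(||y - alpha 1 - X beta||^2 / sigma^2) times prior
  pi(alpha, beta) (sigma^2)^(-1), w.r.t. Lebesgue measure d alpha d beta d sigma^2 on
  R x R^p x (0, infinity); it is set to 0 for s \<le> 0.\<close>
definition post_kernel ::
  "(real \<Rightarrow> real) \<Rightarrow> (real \<Rightarrow> real^'p \<Rightarrow> real) \<Rightarrow> real^'n \<Rightarrow> real^'p^'n::finite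
     \<Rightarrow> real \<times> (real^'p::finite) \<times> real \<Rightarrow> real" where
  "post_kernel f pr y X = (\<lambda>(a, b, s).
     if 0 < s then
       s powr (- real CARD('n) / 2) * f ((norm (y - a *\<^sub>R vec 1 - X *v b))\<^sup>2 / s) * pr a b * (1 / s)
     else 0)"

definition finite_posterior ::
  "(real \<Rightarrow> real) \<Rightarrow> (real \<Rightarrow> real^'p \<Rightarrow> real) \<Rightarrow> real^'n \<Rightarrow> real^'p^'n::finite \<Rightarrow> bool" where
  "finite_posterior f pr y X \<longleftrightarrow>
     integrable lborel (post_kernel f pr y X) \<and>
     integrable lborel (\<lambda>(a, b, s). post_kernel f pr y X (a, b, s) / s) \<and>
     0 < (\<integral>x. post_kernel f pr y X x \<partial>lborel)"

text \<open>Generalized Bayes estimator of sigma^2 under Stein's loss: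
  { E[1/sigma^2 | y] }^(-1).\<close>
definition gb_stein ::
  "(real \<Rightarrow> real) \<Rightarrow> (real \<Rightarrow> real^'p \<Rightarrow> real) \<Rightarrow> real^'n \<Rightarrow> real^'p^'n::finite \<Rightarrow> real" where
  "gb_stein f pr y X =
     1 / ((\<integral>(a, b, s). post_kernel f pr y X (a, b, s) / s \<partial>lborel)
          / (\<integral>x. post_kernel f pr y X x \<partial>lborel))"

end

theory Submission
  imports Defs
begin

text \<open>
  Write \<open>R(\<alpha>, \<beta>) = \<parallel>y - \<alpha>1 - X\<beta>\<parallel>\<^sup>2\<close> and \<open>n\<close> for the sample size. The denominator (\<open>k = 0\<close>) and
  numerator (\<open>k = 1\<close>) of the estimator integrate the posterior kernel \<open>s\<^bsup>-n/2-1\<^esup> f(R/s) \<pi>(\<alpha>, \<beta>)\<close>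
  against \<open>s\<^bsup>-k\<^esup>\<close>; substituting \<open>s = R u\<close> factorises each into \<open>\<integral> u\<^bsup>-n/2-1-k\<^esup> f(1/u) du\<close> times
  \<open>\<integral> \<pi> R\<^bsup>-n/2-k\<^esup>\<close>. By polar coordinates the first factor is, up to a constant independent of
  \<open>f\<close> and \<open>k\<close>, the radial moment \<open>\<integral> |e|\<^bsup>2k\<^esup> f(|e|\<^sup>2) de\<close>, and the ratio of these moments for
  \<open>k = 1\<close> and \<open>k = 0\<close> is \<open>E[\<epsilon>'\<epsilon>] = n\<close> for every admissible \<open>f\<close> (for the normal generator it is
  computed with the Gamma function). Hence the estimator is \<open>\<integral> \<pi> R\<^bsup>-n/2\<^esup> / (n \<integral> \<pi> R\<^bsup>-n/2-1\<^esup>)\<close>,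
  whatever \<open>f\<close> is.
\<close>

definition power_moment :: "(real \<Rightarrow> real) \<Rightarrow> real \<Rightarrow> ennreal" where
  "power_moment h a = (\<integral>\<^sup>+t. indicator {0<..} t * ennreal (t powr a * h t) \<partial>lborel)"

definition radial_moment :: "'n::finite itself \<Rightarrow> (real \<Rightarrow> real) \<Rightarrow> nat \<Rightarrow> ennreal" where
  "radial_moment _ h k = (\<integral>\<^sup>+e. ennreal ((e \<bullet> e) ^ k * h (e \<bullet> e)) \<partial>(lborel :: (real^'n) measure))"

lemma nn_integral_lborel_scaleR:
  fixes h :: "real^'n::finite \<Rightarrow> ennreal"
  assumes [measurable]: "h \<in> borel_measurable borel" and "0 < c"
  shows "(\<integral>\<^sup>+e. h e \<partial>lborel) = ennreal (c powr (real CARD('n) / 2)) * (\<integral>\<^sup>+e. h (sqrt c *\<^sub>R e) \<partial>lborel)"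
proof -
  have "(\<integral>\<^sup>+e. h e \<partial>lborel)
      = (\<integral>\<^sup>+e. h e \<partial>density (distr lborel borel (\<lambda>x. 0 + sqrt c *\<^sub>R x)) (\<lambda>_. \<bar>sqrt c\<bar> ^ DIM(real^'n)))"
    using lborel_affine[of "sqrt c" "0::real^'n"] \<open>0 < c\<close> by simp
  also have "\<dots> = ennreal (\<bar>sqrt c\<bar> ^ DIM(real^'n)) * (\<integral>\<^sup>+e. h (sqrt c *\<^sub>R e) \<partial>lborel)"
    by (simp add: nn_integral_density nn_integral_distr nn_integral_cmult)
  also have "\<bar>sqrt c\<bar> ^ DIM(real^'n) = c powr (real CARD('n) / 2)"
    using \<open>0 < c\<close> by (simp add: powr_half_sqrt[symmetric] powr_realpow[symmetric] powr_powr)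
  finally show ?thesis .
qed

lemma nn_integral_radial_rescale:
  fixes h :: "real \<Rightarrow> ennreal"
  assumes [measurable]: "h \<in> borel_measurable borel" and "0 < c"
  shows "(\<integral>\<^sup>+e. h (c * (e \<bullet> e)) \<partial>(lborel :: (real^'n::finite) measure))
       = ennreal (c powr (- real CARD('n) / 2)) * (\<integral>\<^sup>+e. h (e \<bullet> e) \<partial>(lborel :: (real^'n) measure))"
proof -
  have "(\<integral>\<^sup>+e. h (c * (e \<bullet> e)) \<partial>(lborel :: (real^'n) measure))
      = ennreal ((1 / c) powr (real CARD('n) / 2))
        * (\<integral>\<^sup>+e. h (c * ((sqrt (1 / c) *\<^sub>R e) \<bullet> (sqrt (1 / c) *\<^sub>R e))) \<partial>(lborel :: (real^'n) measure))"
    by (rule nn_integral_lborel_scaleR) (use \<open>0 < c\<close> in auto)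
  also have "(\<lambda>e::real^'n. c * ((sqrt (1 / c) *\<^sub>R e) \<bullet> (sqrt (1 / c) *\<^sub>R e))) = (\<lambda>e. e \<bullet> e)"
  proof
    fix e :: "real^'n"
    have "(sqrt (1 / c) *\<^sub>R e) \<bullet> (sqrt (1 / c) *\<^sub>R e) = (sqrt (1 / c) * sqrt (1 / c)) * (e \<bullet> e)"
      by (simp only: inner_scaleR_left inner_scaleR_right mult.assoc)
    also have "sqrt (1 / c) * sqrt (1 / c) = 1 / c"
      using \<open>0 < c\<close> by simp
    finally show "c * ((sqrt (1 / c) *\<^sub>R e) \<bullet> (sqrt (1 / c) *\<^sub>R e)) = e \<bullet> e"
      using \<open>0 < c\<close> by simp
  qed
  also have "(1 / c) powr (real CARD('n) / 2) = c powr (- real CARD('n) / 2)"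
    using \<open>0 < c\<close> by (simp add: powr_divide powr_minus_divide)
  finally show ?thesis .
qed

lemma power_moment_rescale:
  assumes [measurable]: "h \<in> borel_measurable borel" and "0 < r"
  shows "power_moment (\<lambda>t. h (t / r)) a = ennreal (r powr (a + 1)) * power_moment h a"
proof -
  have shift: "indicator {0<..} (r * u) * ennreal ((r * u) powr a * h (r * u / r))
      = ennreal (r powr a) * (indicator {0<..} u * ennreal (u powr a * h u))" for u
  proof (cases "0 < u")
    case True
    then show ?thesis using \<open>0 < r\<close> by (simp add: powr_mult ennreal_mult' mult.assoc)
  qed (use \<open>0 < r\<close> in \<open>simp add: zero_less_mult_iff\<close>)
  have "power_moment (\<lambda>t. h (t / r)) a
      = ennreal r * (\<integral>\<^sup>+u. indicator {0<..} (r * u) * ennreal ((r * u) powr a * h (r * u / r)) \<partial>lborel)"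
    unfolding power_moment_def using \<open>0 < r\<close> by (subst nn_integral_real_affine[of _ r 0]) auto
  also have "\<dots> = ennreal r * (\<integral>\<^sup>+u. ennreal (r powr a) * (indicator {0<..} u * ennreal (u powr a * h u)) \<partial>lborel)"
    by (simp only: shift)
  also have "\<dots> = ennreal (r powr (a + 1)) * power_moment h a"
    unfolding power_moment_def using \<open>0 < r\<close>
    by (simp add: nn_integral_cmult powr_add ennreal_mult mult.assoc mult.commute)
  finally show ?thesis .
qed

lemma power_moment_const_zero_or_top:
  assumes "a \<noteq> - 1"
  shows "power_moment (\<lambda>_. c) a = 0 \<or> power_moment (\<lambda>_. c) a = \<infinity>"
proof (cases "power_moment (\<lambda>_. c) a")
  case (real x)
  have "power_moment (\<lambda>_. c) a = ennreal (2 powr (a + 1)) * power_moment (\<lambda>_. c) a"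
    using power_moment_rescale[of "\<lambda>_. c" 2 a] by simp
  then have "x = 2 powr (a + 1) * x"
    using real by (simp add: ennreal_mult[symmetric])
  moreover have "2 powr (a + 1) \<noteq> (1::real)"
    using assms by (simp add: powr_eq_one_iff_gen)
  ultimately show ?thesis using real by simp
qed simp

lemma power_moment_exp:
  assumes "0 < b" and "0 \<le> C"
  shows "power_moment (\<lambda>t. C * exp (- t / 2)) (b - 1) = ennreal (2 powr b * C * Gamma b)"
proof -
  have "power_moment (\<lambda>t. C * exp (- t / 2)) (b - 1)
      = power_moment (\<lambda>t. (\<lambda>v. C * exp (- v)) (t / 2)) (b - 1)"
    by simp
  also have "\<dots> = ennreal (2 powr b) * power_moment (\<lambda>v. C * exp (- v)) (b - 1)"
    by (subst power_moment_rescale) auto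
  also have "power_moment (\<lambda>v. C * exp (- v)) (b - 1)
      = (\<integral>\<^sup>+v. ennreal C * ennreal (indicator {0..} v * v powr (b - 1) / exp v) \<partial>lborel)"
    unfolding power_moment_def
    by (rule nn_integral_cong_AE, rule eventually_mono[OF AE_lborel_singleton[of 0]])
      (use assms in \<open>auto simp: indicator_def exp_minus divide_inverse ennreal_mult[symmetric] mult_ac\<close>)
  also have "\<dots> = ennreal C * (\<integral>\<^sup>+v. ennreal (indicator {0..} v * v powr (b - 1) / exp v) \<partial>lborel)"
    by (rule nn_integral_cmult) measurable
  also have "(\<integral>\<^sup>+v. ennreal (indicator {0..} v * v powr (b - 1) / exp v) \<partial>lborel) = ennreal (Gamma b)"
    using Gamma_conv_nn_integral_real[OF assms(1)] by simp
  finally show ?thesis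
    using assms by (simp add: ennreal_mult mult.assoc)
qed

lemma power_moment_indicator_atMost_1:
  assumes "0 \<le> a"
  shows "0 < power_moment (indicator {..1}) a" and "power_moment (indicator {..1}) a < \<infinity>"
proof -
  have "ennreal ((1 / 2) powr a) * ennreal (1 / 2) = (\<integral>\<^sup>+t. ennreal ((1 / 2) powr a) * indicator {1/2..1::real} t \<partial>lborel)"
    by (simp add: nn_integral_cmult_indicator)
  also have "\<dots> \<le> power_moment (indicator {..1}) a"
    unfolding power_moment_def using assms
    by (intro nn_integral_mono) (auto simp: indicator_def intro!: powr_mono2)
  finally show "0 < power_moment (indicator {..1}) a"
    by (rule order.strict_trans2[rotated]) (simp add: ennreal_zero_less_mult_iff ennreal_inverse_positive)
  have "power_moment (indicator {..1}) a \<le> (\<integral>\<^sup>+t. indicator {0..1::real} t \<partial>lborel)"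
    unfolding power_moment_def using assms
    by (intro nn_integral_mono) (auto simp: indicator_def powr_le1)
  then show "power_moment (indicator {..1}) a < \<infinity>"
    by (simp add: le_less_trans)
qed

lemma radial_moment_rescale:
  assumes [measurable]: "h \<in> borel_measurable borel" and "0 < c"
  shows "(\<integral>\<^sup>+e. ennreal ((c * (e \<bullet> e)) ^ k * h (c * (e \<bullet> e))) \<partial>(lborel :: (real^'n::finite) measure))
       = ennreal (c powr (- real CARD('n) / 2)) * radial_moment TYPE('n) h k"
  unfolding radial_moment_def
  by (rule nn_integral_radial_rescale[where h = "\<lambda>t. ennreal (t ^ k * h t)"]) (use \<open>0 < c\<close> in auto)

lemma radial_moment_dilate:
  assumes [measurable]: "h \<in> borel_measurable borel" and "0 < u"
  shows "(\<integral>\<^sup>+e. ennreal ((e \<bullet> e) ^ k * h (e \<bullet> e / u)) \<partial>(lborel :: (real^'n::finite) measure))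
       = ennreal (u powr (real CARD('n) / 2 + real k)) * radial_moment TYPE('n) h k"
proof -
  have "ennreal ((e \<bullet> e) ^ k * h (e \<bullet> e / u))
      = ennreal (u ^ k) * ennreal (((1 / u) * (e \<bullet> e)) ^ k * h ((1 / u) * (e \<bullet> e)))" for e :: "real^'n"
    using \<open>0 < u\<close> by (simp add: ennreal_mult'[symmetric] power_divide)
  then have "(\<integral>\<^sup>+e. ennreal ((e \<bullet> e) ^ k * h (e \<bullet> e / u)) \<partial>(lborel :: (real^'n) measure))
      = ennreal (u ^ k) * (\<integral>\<^sup>+e. ennreal (((1 / u) * (e \<bullet> e)) ^ k * h ((1 / u) * (e \<bullet> e))) \<partial>(lborel :: (real^'n) measure))"
    by (simp add: nn_integral_cmult)
  also have "(\<integral>\<^sup>+e. ennreal (((1 / u) * (e \<bullet> e)) ^ k * h ((1 / u) * (e \<bullet> e))) \<partial>(lborel :: (real^'n) measure))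
      = ennreal (u powr (real CARD('n) / 2)) * radial_moment TYPE('n) h k"
    using radial_moment_rescale[of h "1 / u" k, where 'n = 'n] \<open>0 < u\<close> by (simp add: powr_minus_divide powr_divide)
  finally have "(\<integral>\<^sup>+e. ennreal ((e \<bullet> e) ^ k * h (e \<bullet> e / u)) \<partial>(lborel :: (real^'n) measure))
      = ennreal (u ^ k * u powr (real CARD('n) / 2)) * radial_moment TYPE('n) h k"
    using \<open>0 < u\<close> by (simp add: ennreal_mult mult.assoc)
  moreover have "u ^ k * u powr (real CARD('n) / 2) = u powr (real CARD('n) / 2 + real k)"
    using \<open>0 < u\<close> by (simp add: powr_add powr_realpow)
  ultimately show ?thesis
    by simp
qed

(* Tonelli for F(s, e): integrating out e first is a rescaling of e; integrating out s first,
   the substitution s = u / |e|\<^sup>2 turns F into G, whose e-integral is again a rescaling. *)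
lemma power_moment_inverse_mult_radial_moment:
  fixes f g :: "real \<Rightarrow> real"
  assumes [measurable]: "f \<in> borel_measurable borel" "g \<in> borel_measurable borel"
    and f_nonneg: "\<And>t. 0 \<le> t \<Longrightarrow> 0 \<le> f t" and g_nonneg: "\<And>t. 0 \<le> t \<Longrightarrow> 0 \<le> g t"
  shows "power_moment (\<lambda>s. f (1 / s)) (- real CARD('n) / 2 - 1 - real k) * radial_moment TYPE('n::finite) g m
       = radial_moment TYPE('n) f k * power_moment g (real m + real CARD('n) / 2 - 1)"
proof -
  define n where "n = real CARD('n)"
  define F where "F s e = indicator {0<..} s * ennreal (s powr (- 1 - real k) * f (1 / s))
      * ennreal ((s * (e \<bullet> e)) ^ m * g (s * (e \<bullet> e)))" for s and e :: "real^'n"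
  define G where "G e u = indicator {0<..} u * ennreal (u powr (real m - 1 - real k) * g u)
      * ennreal ((e \<bullet> e) ^ k * f (e \<bullet> e / u))" for e :: "real^'n" and u
  have [measurable]: "case_prod F \<in> borel_measurable (lborel \<Otimes>\<^sub>M lborel)"
    "case_prod G \<in> borel_measurable (lborel \<Otimes>\<^sub>M lborel)"
    unfolding F_def G_def by measurable
  have integrate_e: "(\<integral>\<^sup>+e. F s e \<partial>lborel)
      = indicator {0<..} s * ennreal (s powr (- n / 2 - 1 - real k) * f (1 / s)) * radial_moment TYPE('n) g m" for s
  proof (cases "0 < s")
    case True
    have "(\<integral>\<^sup>+e. F s e \<partial>lborel) = ennreal (s powr (- 1 - real k) * f (1 / s))
        * (\<integral>\<^sup>+e. ennreal ((s * (e \<bullet> e)) ^ m * g (s * (e \<bullet> e))) \<partial>(lborel :: (real^'n) measure))"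
      using True by (simp add: F_def nn_integral_cmult)
    also have "\<dots> = ennreal (s powr (- 1 - real k) * f (1 / s) * s powr (- n / 2)) * radial_moment TYPE('n) g m"
      using True f_nonneg[of "1 / s"]
      by (simp add: radial_moment_rescale n_def ennreal_mult mult.assoc)
    also have "s powr (- 1 - real k) * f (1 / s) * s powr (- n / 2) = s powr (- n / 2 - 1 - real k) * f (1 / s)"
      by (simp add: powr_add[symmetric] mult_ac) (rule disjI2, rule arg_cong[where f = "(powr) s"], simp)
    finally show ?thesis using True by simp
  qed (simp add: F_def)
  have integrate_s: "(\<integral>\<^sup>+s. F s e \<partial>lborel) = (\<integral>\<^sup>+u. G e u \<partial>lborel)" if "e \<noteq> 0" for e :: "real^'n"
  proof -
    define r where "r = e \<bullet> e"
    have "0 < r" using that by (simp add: r_def)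
    have "F (u / r) e = ennreal r * G e u" for u
    proof (cases "0 < u")
      case True
      have "(u / r) powr (- 1 - real k) * ((u / r * r) ^ m * g (u / r * r)) = r * r ^ k * (u powr (real m - 1 - real k) * g u)"
        using True \<open>0 < r\<close>
        by (simp add: powr_divide powr_diff powr_realpow powr_add field_simps)
      then show ?thesis
        using True \<open>0 < r\<close> f_nonneg[of "r / u"] g_nonneg[of u]
        by (auto simp: F_def G_def r_def[symmetric] ennreal_mult[symmetric] zero_less_divide_iff mult_ac)
    qed (use \<open>0 < r\<close> in \<open>simp add: F_def G_def zero_less_divide_iff\<close>)
    moreover have "(\<integral>\<^sup>+s. F s e \<partial>lborel) = ennreal (1 / r) * (\<integral>\<^sup>+u. F (u / r) e \<partial>lborel)"
      using nn_integral_real_affine[of "\<lambda>s. F s e" "1 / r" 0] \<open>0 < r\<close> by simp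
    ultimately show ?thesis
      using \<open>0 < r\<close> by (simp add: nn_integral_cmult ennreal_mult[symmetric] mult.assoc[symmetric])
  qed
  have integrate_e': "(\<integral>\<^sup>+e. G e u \<partial>lborel)
      = indicator {0<..} u * ennreal (u powr (real m + n / 2 - 1) * g u) * radial_moment TYPE('n) f k" for u
  proof (cases "0 < u")
    case True
    have "(\<integral>\<^sup>+e. G e u \<partial>lborel) = ennreal (u powr (real m - 1 - real k) * g u)
        * (\<integral>\<^sup>+e. ennreal ((e \<bullet> e) ^ k * f (e \<bullet> e / u)) \<partial>(lborel :: (real^'n) measure))"
      using True by (simp add: G_def nn_integral_cmult)
    also have "\<dots> = ennreal (u powr (real m - 1 - real k) * g u * u powr (n / 2 + real k)) * radial_moment TYPE('n) f k"
      using True g_nonneg[of u] by (simp add: radial_moment_dilate n_def ennreal_mult mult.assoc)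
    also have "u powr (real m - 1 - real k) * g u * u powr (n / 2 + real k) = u powr (real m + n / 2 - 1) * g u"
      by (simp add: powr_add[symmetric] mult_ac) (rule disjI2, rule arg_cong[where f = "(powr) u"], simp)
    finally show ?thesis using True by simp
  qed (simp add: G_def)
  have "power_moment (\<lambda>s. f (1 / s)) (- n / 2 - 1 - real k) * radial_moment TYPE('n) g m
      = (\<integral>\<^sup>+s. (\<integral>\<^sup>+e. F s e \<partial>lborel) \<partial>lborel)"
    by (simp add: power_moment_def integrate_e nn_integral_multc)
  also have "\<dots> = (\<integral>\<^sup>+e. (\<integral>\<^sup>+s. F s e \<partial>lborel) \<partial>(lborel :: (real^'n) measure))"
    by (rule lborel_pair.Fubini'[symmetric]) measurable
  also have "\<dots> = (\<integral>\<^sup>+e. (\<integral>\<^sup>+u. G e u \<partial>lborel) \<partial>lborel)"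
    by (rule nn_integral_cong_AE, rule eventually_mono[OF AE_lborel_singleton[of 0]]) (simp add: integrate_s)
  also have "\<dots> = (\<integral>\<^sup>+u. (\<integral>\<^sup>+e. G e u \<partial>(lborel :: (real^'n) measure)) \<partial>lborel)"
    by (rule lborel_pair.Fubini'[symmetric]) measurable
  also have "\<dots> = power_moment g (real m + n / 2 - 1) * radial_moment TYPE('n) f k"
    by (simp add: power_moment_def integrate_e' nn_integral_multc)
  finally show ?thesis by (simp add: n_def mult.commute)
qed

lemma radial_moment_unit_ball:
  "radial_moment TYPE('n::finite) (indicator {..1}) 0 = ennreal (unit_ball_vol (real CARD('n)))"
proof -
  have "radial_moment TYPE('n) (indicator {..1}) 0 = (\<integral>\<^sup>+e. indicator (cball (0::real^'n) 1) e \<partial>lborel)"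
    unfolding radial_moment_def
  proof (intro nn_integral_cong)
    fix e :: "real^'n"
    have "e \<in> cball 0 1 \<longleftrightarrow> e \<bullet> e \<le> 1"
      by (simp add: norm_eq_sqrt_inner)
    then show "ennreal ((e \<bullet> e) ^ 0 * indicator {..1} (e \<bullet> e)) = indicator (cball 0 1) e"
      by (simp add: indicator_def)
  qed
  also have "\<dots> = emeasure lborel (cball (0::real^'n) 1)"
    by simp
  also have "\<dots> = ennreal (unit_ball_vol (real CARD('n)))"
    by (subst emeasure_cball) auto
  finally show ?thesis .
qed

(* Polar coordinates; the constant power_moment (indicator {..1}) (n/2 - 1) is 2/n, but its
   value is never needed. *)
lemma radial_moment_polar:
  fixes g :: "real \<Rightarrow> real"
  assumes [measurable]: "g \<in> borel_measurable borel" and g_nonneg: "\<And>t. 0 \<le> t \<Longrightarrow> 0 \<le> g t"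
  shows "radial_moment TYPE('n::finite) g m * power_moment (indicator {..1}) (real CARD('n) / 2 - 1)
       = ennreal (unit_ball_vol (real CARD('n))) * power_moment g (real m + real CARD('n) / 2 - 1)"
proof -
  define n where "n = real CARD('n)"
  define V where "V = ennreal (unit_ball_vol n)"
  define Q where "Q = power_moment (\<lambda>s. indicator {..1} (1 / s) :: real) (- n / 2 - 1)"
  have ball: "radial_moment TYPE('n) (indicator {..1}) 0 = V"
    by (simp add: radial_moment_unit_ball V_def n_def)
  have "0 < unit_ball_vol n"
    by (rule unit_ball_vol_pos) (simp add: n_def)
  then have "V \<noteq> 0" "V \<noteq> \<infinity>"
    by (auto simp: V_def)
  have "Q * V = V * power_moment (indicator {..1}) (n / 2 - 1)"
    using power_moment_inverse_mult_radial_moment[of "indicator {..1}" "indicator {..1}" 0 0, where 'n = 'n]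
    by (simp add: ball Q_def n_def)
  then have "Q = power_moment (indicator {..1}) (n / 2 - 1)"
    using \<open>V \<noteq> 0\<close> \<open>V \<noteq> \<infinity>\<close> by (subst (asm) mult.commute) (simp add: ennreal_mult_cancel_left)
  moreover have "Q * radial_moment TYPE('n) g m = V * power_moment g (real m + n / 2 - 1)"
    using power_moment_inverse_mult_radial_moment[of "indicator {..1}" g 0 m, where 'n = 'n] g_nonneg
    by (simp add: ball Q_def n_def)
  ultimately show ?thesis
    by (simp add: mult.commute n_def V_def)
qed

lemma radial_moments_normal_generator:
  assumes "2 \<le> CARD('n::finite)"
  shows "radial_moment TYPE('n) (normal_generator TYPE('n)) 1
       = ennreal (real CARD('n)) * radial_moment TYPE('n) (normal_generator TYPE('n)) 0"
proof -
  define n where "n = real CARD('n)"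
  define C where "C = (2 * pi) powr (- n / 2)"
  define J where "J = power_moment (indicator {..1}) (n / 2 - 1)"
  define V where "V = ennreal (unit_ball_vol n)"
  have phi: "normal_generator TYPE('n) = (\<lambda>t. C * exp (- t / 2))"
    by (simp add: normal_generator_def C_def n_def fun_eq_iff)
  have "0 \<le> C" "0 < n / 2"
    using assms by (simp_all add: C_def n_def)
  have "0 < J" "J < \<infinity>"
    unfolding J_def using assms by (intro power_moment_indicator_atMost_1; simp add: n_def)+
  have polar: "radial_moment TYPE('n) (normal_generator TYPE('n)) m * J
      = V * ennreal (2 powr (real m + n / 2) * C * Gamma (real m + n / 2))" for m
  proof -
    have "0 < real m + n / 2"
      using \<open>0 < n / 2\<close> by simp
    have "radial_moment TYPE('n) (normal_generator TYPE('n)) m * J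
        = V * power_moment (\<lambda>t. C * exp (- t / 2)) (real m + n / 2 - 1)"
      using radial_moment_polar[of "normal_generator TYPE('n)" m, where 'n = 'n] \<open>0 \<le> C\<close>
      by (simp add: phi J_def V_def n_def)
    then show ?thesis
      by (simp only: power_moment_exp[OF \<open>0 < real m + n / 2\<close> \<open>0 \<le> C\<close>])
  qed
  have "Gamma (n / 2 + 1) = n / 2 * Gamma (n / 2)"
    using \<open>0 < n / 2\<close> by (intro Gamma_plus1) (auto elim!: nonpos_Ints_cases)
  then have "2 powr (1 + n / 2) * C * Gamma (1 + n / 2) = n * (2 powr (n / 2) * C * Gamma (n / 2))"
    by (simp add: powr_add add.commute)
  note gamma = this
  have "radial_moment TYPE('n) (normal_generator TYPE('n)) 1 * J
      = V * ennreal (2 powr (1 + n / 2) * C * Gamma (1 + n / 2))"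
    using polar[of 1] by simp
  also have "\<dots> = ennreal n * (V * ennreal (2 powr (n / 2) * C * Gamma (n / 2)))"
    using \<open>0 < n / 2\<close> by (simp add: gamma ennreal_mult' mult.left_commute)
  also have "V * ennreal (2 powr (n / 2) * C * Gamma (n / 2)) = radial_moment TYPE('n) (normal_generator TYPE('n)) 0 * J"
    using polar[of 0] by simp
  finally have "radial_moment TYPE('n) (normal_generator TYPE('n)) 1 * J
      = (ennreal n * radial_moment TYPE('n) (normal_generator TYPE('n)) 0) * J"
    by (simp only: mult.assoc)
  then show ?thesis
    using \<open>0 < J\<close> \<open>J < \<infinity>\<close> ennreal_mult_cancel_left[of J] by (auto simp: mult.commute n_def)
qed

lemma radial_moments_spherical:
  assumes "spherical_error_density f TYPE('n::finite)"
  shows "radial_moment TYPE('n) f 0 = 1"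
    and "radial_moment TYPE('n) f 1 = ennreal (real CARD('n))"
proof -
  note dens = assms[unfolded spherical_error_density_def]
  have f_nonneg: "0 \<le> f (e \<bullet> e)" for e :: "real^'n"
    using dens by auto
  have "radial_moment TYPE('n) f 0 = (\<integral>\<^sup>+e. ennreal (f (e \<bullet> e)) \<partial>(lborel :: (real^'n) measure))"
    by (simp add: radial_moment_def)
  also have "\<dots> = ennreal (\<integral>e. f (e \<bullet> e) \<partial>(lborel :: (real^'n) measure))"
    using dens f_nonneg by (intro nn_integral_eq_integral) auto
  finally have "radial_moment TYPE('n) f 0 = ennreal (\<integral>e. f (e \<bullet> e) \<partial>(lborel :: (real^'n) measure))" .
  then show "radial_moment TYPE('n) f 0 = 1"
    using dens by simp
  have trace: "(e \<bullet> e) ^ 1 * f (e \<bullet> e) = (\<Sum>i\<in>UNIV. e $ i * e $ i * f (e \<bullet> e))" for e :: "real^'n"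
    by (simp add: inner_vec_def sum_distrib_right)
  have "radial_moment TYPE('n) f 1
      = ennreal (\<integral>e. (\<Sum>i\<in>UNIV. e $ i * e $ i * f (e \<bullet> e)) \<partial>(lborel :: (real^'n) measure))"
    unfolding radial_moment_def trace using dens f_nonneg
    by (intro nn_integral_eq_integral Bochner_Integration.integrable_sum) (auto intro!: sum_nonneg)
  also have "\<dots> = ennreal (\<Sum>i\<in>UNIV. (\<integral>e. e $ i * e $ i * f (e \<bullet> e) \<partial>(lborel :: (real^'n) measure)))"
    using dens by (subst Bochner_Integration.integral_sum) auto
  finally show "radial_moment TYPE('n) f 1 = ennreal (real CARD('n))"
    using dens by simp
qed

lemma power_moment_inverse_second_moment:
  fixes f :: "real \<Rightarrow> real"
  assumes [measurable]: "f \<in> borel_measurable borel" and f_nonneg: "\<And>t. 0 \<le> t \<Longrightarrow> 0 \<le> f t"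
    and moments: "radial_moment TYPE('n::finite) f 1 = ennreal (real CARD('n)) * radial_moment TYPE('n) f 0"
  shows "power_moment (\<lambda>s. f (1 / s)) (- real CARD('n) / 2 - 2)
       = ennreal (real CARD('n)) * power_moment (\<lambda>s. f (1 / s)) (- real CARD('n) / 2 - 1)"
proof -
  define n where "n = real CARD('n)"
  define V where "V = ennreal (unit_ball_vol n)"
  define J where "J = power_moment (indicator {..1}) (n / 2 - 1)"
  have "0 < unit_ball_vol n"
    by (rule unit_ball_vol_pos) (simp add: n_def)
  then have "V \<noteq> 0" "V \<noteq> \<infinity>"
    by (auto simp: V_def)
  have scaled: "power_moment (\<lambda>s. f (1 / s)) (- n / 2 - 1 - real k) * V = radial_moment TYPE('n) f k * J" for k
    using power_moment_inverse_mult_radial_moment[of f "indicator {..1}" k 0, where 'n = 'n] f_nonneg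
    by (simp add: radial_moment_unit_ball V_def J_def n_def)
  have "power_moment (\<lambda>s. f (1 / s)) (- n / 2 - 2) * V = radial_moment TYPE('n) f 1 * J"
    using scaled[of 1] by (simp add: diff_diff_eq)
  also have "\<dots> = ennreal n * (radial_moment TYPE('n) f 0 * J)"
    using moments by (simp add: n_def mult.assoc)
  also have "radial_moment TYPE('n) f 0 * J = power_moment (\<lambda>s. f (1 / s)) (- n / 2 - 1) * V"
    using scaled[of 0] by simp
  finally have "power_moment (\<lambda>s. f (1 / s)) (- n / 2 - 2) * V
      = (ennreal n * power_moment (\<lambda>s. f (1 / s)) (- n / 2 - 1)) * V"
    by (simp only: mult.assoc)
  then show ?thesis
    using \<open>V \<noteq> 0\<close> \<open>V \<noteq> \<infinity>\<close> ennreal_mult_cancel_left[of V] by (simp add: mult.commute n_def)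
qed

definition residual_sq :: "real^'n::finite \<Rightarrow> real^'p::finite^'n \<Rightarrow> real \<Rightarrow> real^'p \<Rightarrow> real" where
  "residual_sq y X a b = (norm (y - a *\<^sub>R vec 1 - X *v b))\<^sup>2"

definition prior_residual_moment ::
  "(real \<Rightarrow> real^'p \<Rightarrow> real) \<Rightarrow> real^'n::finite \<Rightarrow> real^'p::finite^'n \<Rightarrow> real \<Rightarrow> ennreal" where
  "prior_residual_moment pr y X c = (\<integral>\<^sup>+w. ennreal (pr (fst w) (snd w)
     * (if 0 < residual_sq y X (fst w) (snd w) then residual_sq y X (fst w) (snd w) powr (- c) else 0))
     \<partial>(lborel \<Otimes>\<^sub>M lborel))"

lemma borel_measurable_residual_sq [measurable]:
  fixes y :: "real^'n::finite" and X :: "real^'p::finite^'n"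
  shows "(\<lambda>x. residual_sq y X (fst x) (fst (snd x))) \<in> borel_measurable (borel \<Otimes>\<^sub>M (borel \<Otimes>\<^sub>M (borel :: real measure)))"
  "(\<lambda>w. residual_sq y X (fst w) (snd w)) \<in> borel_measurable (borel \<Otimes>\<^sub>M borel)"
proof -
  have "(\<lambda>x::real \<times> (real^'p) \<times> real. residual_sq y X (fst x) (fst (snd x))) \<in> borel_measurable borel"
    "(\<lambda>w::real \<times> (real^'p). residual_sq y X (fst w) (snd w)) \<in> borel_measurable borel"
    unfolding residual_sq_def
    by (intro borel_measurable_continuous_onI continuous_intros
        bounded_linear.continuous_on[OF matrix_vector_mul_bounded_linear])+
  then show "(\<lambda>x. residual_sq y X (fst x) (fst (snd x))) \<in> borel_measurable (borel \<Otimes>\<^sub>M (borel \<Otimes>\<^sub>M (borel :: real measure)))"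
    "(\<lambda>w. residual_sq y X (fst w) (snd w)) \<in> borel_measurable (borel \<Otimes>\<^sub>M borel)"
    by (simp_all add: borel_prod)
qed

lemma borel_measurable_prior:
  fixes pr :: "real \<Rightarrow> 'b::second_countable_topology \<Rightarrow> real"
  assumes "(\<lambda>(a, b). pr a b) \<in> borel_measurable borel"
  shows "(\<lambda>w. pr (fst w) (snd w)) \<in> borel_measurable (borel \<Otimes>\<^sub>M borel)"
    and "(\<lambda>x. pr (fst x) (fst (snd x))) \<in> borel_measurable (borel \<Otimes>\<^sub>M (borel \<Otimes>\<^sub>M (borel :: real measure)))"
proof -
  show "(\<lambda>w. pr (fst w) (snd w)) \<in> borel_measurable (borel \<Otimes>\<^sub>M borel)"
    using assms by (simp add: borel_prod case_prod_beta')
  have "(\<lambda>x. (fst x, fst (snd x))) \<in> measurable (borel :: (real \<times> 'b \<times> real) measure) borel"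
    by (intro borel_measurable_continuous_onI continuous_intros)
  from measurable_compose[OF this assms]
  show "(\<lambda>x. pr (fst x) (fst (snd x))) \<in> borel_measurable (borel \<Otimes>\<^sub>M (borel \<Otimes>\<^sub>M (borel :: real measure)))"
    by (simp add: borel_prod)
qed

lemma post_kernel_eq:
  fixes y :: "real^'n::finite"
  shows "post_kernel f pr y X (a, b, s)
     = (if 0 < s then pr a b * (s powr (- real CARD('n) / 2 - 1) * f (residual_sq y X a b / s)) else 0)"
proof (cases "0 < s")
  case True
  then have "s powr (- real CARD('n) / 2 - 1) = s powr (- real CARD('n) / 2) / s"
    by (simp add: powr_diff)
  then show ?thesis
    using True by (simp add: post_kernel_def residual_sq_def mult_ac)
qed (simp add: post_kernel_def)

lemma borel_measurable_post_kernel: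
  fixes y :: "real^'n::finite" and X :: "real^'p::finite^'n"
  assumes [measurable]: "f \<in> borel_measurable borel" and "(\<lambda>(a, b). pr a b) \<in> borel_measurable borel"
  shows "post_kernel f pr y X \<in> borel_measurable (borel \<Otimes>\<^sub>M (borel \<Otimes>\<^sub>M borel))"
proof -
  note [measurable] = borel_measurable_prior[OF assms(2)]
  have "post_kernel f pr y X = (\<lambda>x. if 0 < snd (snd x) then pr (fst x) (fst (snd x))
      * (snd (snd x) powr (- real CARD('n) / 2 - 1) * f (residual_sq y X (fst x) (fst (snd x)) / snd (snd x))) else 0)"
    by (auto simp: fun_eq_iff post_kernel_eq)
  then show ?thesis
    by simp
qed

lemma nn_integral_post_kernel_slice:
  fixes y :: "real^'n::finite"
  assumes [measurable]: "f \<in> borel_measurable borel" and "0 \<le> pr a b"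
  shows "(\<integral>\<^sup>+s. ennreal (post_kernel f pr y X (a, b, s) / s ^ k) \<partial>lborel)
       = ennreal (pr a b) * power_moment (\<lambda>s. f (residual_sq y X a b / s)) (- real CARD('n) / 2 - 1 - real k)"
proof -
  have "ennreal (post_kernel f pr y X (a, b, s) / s ^ k) = ennreal (pr a b)
      * (indicator {0<..} s * ennreal (s powr (- real CARD('n) / 2 - 1 - real k) * f (residual_sq y X a b / s)))" for s
  proof (cases "0 < s")
    case True
    have "post_kernel f pr y X (a, b, s) / s ^ k
        = pr a b * ((s powr (- real CARD('n) / 2 - 1) / s ^ k) * f (residual_sq y X a b / s))"
      using True by (simp add: post_kernel_eq)
    also have "s powr (- real CARD('n) / 2 - 1) / s ^ k = s powr (- real CARD('n) / 2 - 1 - real k)"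
      using True by (simp add: powr_diff powr_realpow)
    finally show ?thesis
      using True \<open>0 \<le> pr a b\<close> by (simp add: ennreal_mult')
  qed (simp add: post_kernel_eq)
  then show ?thesis
    unfolding power_moment_def by (simp add: nn_integral_cmult)
qed

lemma nn_integral_lborel_assoc:
  fixes K :: "real \<times> 'b::euclidean_space \<times> real \<Rightarrow> ennreal"
  assumes [measurable]: "K \<in> borel_measurable (lborel \<Otimes>\<^sub>M (lborel \<Otimes>\<^sub>M lborel))"
  shows "(\<integral>\<^sup>+x. K x \<partial>lborel) = (\<integral>\<^sup>+w. (\<integral>\<^sup>+s. K (fst w, snd w, s) \<partial>lborel) \<partial>(lborel \<Otimes>\<^sub>M lborel))"
proof -
  have "(\<integral>\<^sup>+x. K x \<partial>lborel) = (\<integral>\<^sup>+a. (\<integral>\<^sup>+bs. K (a, bs) \<partial>(lborel \<Otimes>\<^sub>M lborel)) \<partial>lborel)"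
    by (simp add: lborel_prod[symmetric] lborel_pair.nn_integral_fst)
  also have "\<dots> = (\<integral>\<^sup>+a. (\<integral>\<^sup>+b. (\<integral>\<^sup>+s. K (a, b, s) \<partial>lborel) \<partial>lborel) \<partial>lborel)"
  proof (rule nn_integral_cong)
    fix a :: real
    have slice_measurable: "(\<lambda>bs. K (a, bs)) \<in> borel_measurable (lborel \<Otimes>\<^sub>M lborel)"
      by measurable
    show "(\<integral>\<^sup>+bs. K (a, bs) \<partial>(lborel \<Otimes>\<^sub>M lborel)) = (\<integral>\<^sup>+b. (\<integral>\<^sup>+s. K (a, b, s) \<partial>lborel) \<partial>lborel)"
      using lborel.nn_integral_fst[OF slice_measurable] by simp
  qed
  also have "\<dots> = (\<integral>\<^sup>+w. (\<integral>\<^sup>+s. K (fst w, snd w, s) \<partial>lborel) \<partial>(lborel \<Otimes>\<^sub>M lborel))"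
  proof -
    have "(\<lambda>w. \<integral>\<^sup>+s. K (fst w, snd w, s) \<partial>lborel) \<in> borel_measurable (lborel \<Otimes>\<^sub>M lborel)"
      by measurable
    from lborel.nn_integral_fst[OF this] show ?thesis
      by simp
  qed
  finally show ?thesis .
qed

lemma nn_integral_post_kernel:
  fixes y :: "real^'n::finite" and X :: "real^'p::finite^'n"
  assumes [measurable]: "f \<in> borel_measurable borel"
    and pr_nonneg: "\<And>a b. 0 \<le> pr a b" and pr_meas: "(\<lambda>(a, b). pr a b) \<in> borel_measurable borel"
    and finite: "(\<integral>\<^sup>+x. ennreal (post_kernel f pr y X x / snd (snd x) ^ k) \<partial>lborel) < \<infinity>"
  shows "(\<integral>\<^sup>+x. ennreal (post_kernel f pr y X x / snd (snd x) ^ k) \<partial>lborel)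
       = power_moment (\<lambda>s. f (1 / s)) (- real CARD('n) / 2 - 1 - real k)
         * prior_residual_moment pr y X (real CARD('n) / 2 + real k)"
proof -
  define e where "e = - real CARD('n) / 2 - 1 - real k"
  define Q where "Q = power_moment (\<lambda>s. f (1 / s)) e"
  define R where "R w = residual_sq y X (fst w) (snd w)" for w :: "real \<times> (real^'p)"
  define K where "K x = ennreal (post_kernel f pr y X x / snd (snd x) ^ k)" for x :: "real \<times> (real^'p) \<times> real"
  define P where "P w = ennreal (pr (fst w) (snd w) * (if 0 < R w then R w powr (- (real CARD('n) / 2 + real k)) else 0))"
    for w :: "real \<times> (real^'p)"
  define Z where "Z w = (if R w = 0 then ennreal (pr (fst w) (snd w)) else 0)" for w :: "real \<times> (real^'p)"
  note [measurable] = borel_measurable_prior[OF pr_meas] borel_measurable_post_kernel[OF _ pr_meas]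
  have [measurable]: "K \<in> borel_measurable (lborel \<Otimes>\<^sub>M (lborel \<Otimes>\<^sub>M lborel))"
    "P \<in> borel_measurable (lborel \<Otimes>\<^sub>M lborel)" "Z \<in> borel_measurable (lborel \<Otimes>\<^sub>M lborel)"
    unfolding K_def P_def Z_def R_def by measurable
  have slice: "(\<integral>\<^sup>+s. K (fst w, snd w, s) \<partial>lborel) = Q * P w + Z w * power_moment (\<lambda>_. f 0) e" for w
  proof -
    have slice_eq: "(\<integral>\<^sup>+s. K (fst w, snd w, s) \<partial>lborel)
        = ennreal (pr (fst w) (snd w)) * power_moment (\<lambda>s. f (R w / s)) e"
      using nn_integral_post_kernel_slice[of f pr "fst w" "snd w" y X k] pr_nonneg
      by (simp add: K_def e_def R_def)
    have "0 \<le> R w"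
      by (simp add: R_def residual_sq_def)
    then consider "0 < R w" | "R w = 0"
      by linarith
    then show ?thesis
    proof cases
      case 1
      have "power_moment (\<lambda>s. f (R w / s)) e = ennreal (R w powr (- (real CARD('n) / 2 + real k))) * Q"
        using power_moment_rescale[of "\<lambda>u. f (1 / u)" "R w" e] 1 by (simp add: Q_def e_def)
      then show ?thesis
        using 1 pr_nonneg by (simp add: slice_eq P_def Z_def ennreal_mult mult_ac)
    qed (simp add: slice_eq P_def Z_def)
  qed
  have "0 < real CARD('n)"
    by simp
  then have "e \<noteq> - 1"
    unfolding e_def by linarith
  \<comment> \<open>Where the residual vanishes the s-integral is a multiple of \<open>\<integral>\<^sub>0\<^sup>\<infinity> s\<^sup>e ds \<in> {0, \<infinity>}\<close>,
      so finiteness of the posterior forces this part to vanish.\<close>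
  then have Z_term: "(\<integral>\<^sup>+w. Z w \<partial>(lborel \<Otimes>\<^sub>M lborel)) * power_moment (\<lambda>_. f 0) e \<in> {0, \<infinity>}"
    using power_moment_const_zero_or_top[of e "f 0"] by (auto simp: ennreal_mult_top)
  have "(\<integral>\<^sup>+x. K x \<partial>lborel) = (\<integral>\<^sup>+w. Q * P w + Z w * power_moment (\<lambda>_. f 0) e \<partial>(lborel \<Otimes>\<^sub>M lborel))"
    by (simp add: nn_integral_lborel_assoc slice)
  also have "\<dots> = Q * (\<integral>\<^sup>+w. P w \<partial>(lborel \<Otimes>\<^sub>M lborel))
      + (\<integral>\<^sup>+w. Z w \<partial>(lborel \<Otimes>\<^sub>M lborel)) * power_moment (\<lambda>_. f 0) e"
    by (simp add: nn_integral_add nn_integral_cmult nn_integral_multc)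
  also have "(\<integral>\<^sup>+w. P w \<partial>(lborel \<Otimes>\<^sub>M lborel)) = prior_residual_moment pr y X (real CARD('n) / 2 + real k)"
    unfolding prior_residual_moment_def P_def R_def ..
  finally show ?thesis
    using finite Z_term by (auto simp: K_def Q_def e_def)
qed

lemma integral_post_kernel:
  fixes y :: "real^'n::finite" and X :: "real^'p::finite^'n"
  assumes [measurable]: "f \<in> borel_measurable borel" and f_nonneg: "\<And>t. 0 \<le> t \<Longrightarrow> 0 \<le> f t"
    and pr_nonneg: "\<And>a b. 0 \<le> pr a b" and pr_meas: "(\<lambda>(a, b). pr a b) \<in> borel_measurable borel"
    and integrable: "integrable lborel (\<lambda>x. post_kernel f pr y X x / snd (snd x) ^ k)"
  shows "(\<integral>x. post_kernel f pr y X x / snd (snd x) ^ k \<partial>lborel)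
       = enn2real (power_moment (\<lambda>s. f (1 / s)) (- real CARD('n) / 2 - 1 - real k)
           * prior_residual_moment pr y X (real CARD('n) / 2 + real k))"
proof -
  define I where "I = (\<integral>x. post_kernel f pr y X x / snd (snd x) ^ k \<partial>lborel)"
  have kernel_nonneg: "0 \<le> post_kernel f pr y X x / snd (snd x) ^ k" for x
    using f_nonneg pr_nonneg by (cases x) (auto simp: post_kernel_def)
  then have "(\<integral>\<^sup>+x. ennreal (post_kernel f pr y X x / snd (snd x) ^ k) \<partial>lborel) = ennreal I"
    unfolding I_def using integrable by (intro nn_integral_eq_integral) auto
  then have moment_product: "ennreal I = power_moment (\<lambda>s. f (1 / s)) (- real CARD('n) / 2 - 1 - real k)
      * prior_residual_moment pr y X (real CARD('n) / 2 + real k)"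
    using nn_integral_post_kernel[OF _ pr_nonneg pr_meas, of f y X k] by simp
  have "0 \<le> I"
    unfolding I_def using kernel_nonneg by (simp add: integral_nonneg)
  then have "I = enn2real (ennreal I)"
    by simp
  also have "\<dots> = enn2real (power_moment (\<lambda>s. f (1 / s)) (- real CARD('n) / 2 - 1 - real k)
      * prior_residual_moment pr y X (real CARD('n) / 2 + real k))"
    by (simp only: moment_product)
  finally show ?thesis
    unfolding I_def .
qed

definition prior_residual_ratio :: "(real \<Rightarrow> real^'p \<Rightarrow> real) \<Rightarrow> real^'n::finite \<Rightarrow> real^'p::finite^'n \<Rightarrow> real" where
  "prior_residual_ratio pr y X = enn2real (prior_residual_moment pr y X (real CARD('n) / 2))
     / (real CARD('n) * enn2real (prior_residual_moment pr y X (real CARD('n) / 2 + 1)))"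

lemma gb_stein_eq_prior_residual_ratio:
  fixes y :: "real^'n::finite" and X :: "real^'p::finite^'n"
  assumes [measurable]: "f \<in> borel_measurable borel" and f_nonneg: "\<And>t. 0 \<le> t \<Longrightarrow> 0 \<le> f t"
    and pr_nonneg: "\<And>a b. 0 \<le> pr a b" and pr_meas: "(\<lambda>(a, b). pr a b) \<in> borel_measurable borel"
    and posterior: "finite_posterior f pr y X"
    and moments: "radial_moment TYPE('n) f 1 = ennreal (real CARD('n)) * radial_moment TYPE('n) f 0"
  shows "gb_stein f pr y X = prior_residual_ratio pr y X"
proof -
  define n where "n = real CARD('n)"
  define q where "q = enn2real (power_moment (\<lambda>s. f (1 / s)) (- n / 2 - 1))"
  define p0 where "p0 = enn2real (prior_residual_moment pr y X (n / 2))"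
  define p1 where "p1 = enn2real (prior_residual_moment pr y X (n / 2 + 1))"
  note real_integral = integral_post_kernel[OF _ f_nonneg pr_nonneg pr_meas, where y = y and X = X]
  have integrable_kernel: "integrable lborel (post_kernel f pr y X)"
    and integrable_kernel_inverse: "integrable lborel (\<lambda>(a, b, s). post_kernel f pr y X (a, b, s) / s)"
    and denominator_pos: "0 < (\<integral>x. post_kernel f pr y X x \<partial>lborel)"
    using posterior unfolding finite_posterior_def by blast+
  have kernel_inverse: "(\<lambda>(a, b, s). post_kernel f pr y X (a, b, s) / s) = (\<lambda>x. post_kernel f pr y X x / snd (snd x) ^ 1)"
    by (auto simp: fun_eq_iff)
  have "power_moment (\<lambda>s. f (1 / s)) (- n / 2 - 2) = ennreal n * power_moment (\<lambda>s. f (1 / s)) (- n / 2 - 1)"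
    using power_moment_inverse_second_moment[OF _ f_nonneg moments] by (simp add: n_def)
  then have numerator: "(\<integral>(a, b, s). post_kernel f pr y X (a, b, s) / s \<partial>lborel) = q * (n * p1)"
    using real_integral[where k = 1] integrable_kernel_inverse
    by (simp add: kernel_inverse q_def p1_def n_def enn2real_mult diff_diff_eq)
  have denominator: "(\<integral>x. post_kernel f pr y X x \<partial>lborel) = q * p0"
    using real_integral[where k = 0] integrable_kernel by (simp add: q_def p0_def n_def enn2real_mult)
  have "q \<noteq> 0"
    using denominator_pos denominator by auto
  have "gb_stein f pr y X = (q * p0) / (q * (n * p1))"
    by (simp add: gb_stein_def numerator denominator)
  with \<open>q \<noteq> 0\<close> show ?thesis
    by (simp add: prior_residual_ratio_def mult_divide_mult_cancel_left_if p0_def p1_def n_def)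
qed

theorem theorem2p1:
  fixes X :: "real^'p::finite^'n::finite"
    and y :: "real^'n"
    and pr :: "real \<Rightarrow> real^'p \<Rightarrow> real"
    and f g :: "real \<Rightarrow> real"
  assumes centered: "\<forall>i. column i X \<bullet> vec 1 = 0"
    and full_rank: "rank X = CARD('p)"
    and n_gt: "CARD('n) > CARD('p) + 1"
    and prior_nonneg: "\<forall>a b. 0 \<le> pr a b"
    and prior_meas: "(\<lambda>(a, b). pr a b) \<in> borel_measurable borel"
    and f_dens: "spherical_error_density f TYPE('n)"
    and g_dens: "spherical_error_density g TYPE('n)"
    and fin_f: "finite_posterior f pr y X"
    and fin_g: "finite_posterior g pr y X"
    and fin_normal: "finite_posterior (normal_generator TYPE('n)) pr y X"
  shows "gb_stein f pr y X = gb_stein g pr y X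
       \<and> gb_stein f pr y X = gb_stein (normal_generator TYPE('n)) pr y X"
proof -
  have "2 \<le> CARD('n)"
    using n_gt by simp
  have pr_nonneg: "\<And>a b. 0 \<le> pr a b"
    using prior_nonneg by simp
  have spherical: "gb_stein h pr y X = prior_residual_ratio pr y X"
    if "spherical_error_density h TYPE('n)" "finite_posterior h pr y X" for h
  proof -
    have "h \<in> borel_measurable borel" "\<And>t. 0 \<le> t \<Longrightarrow> 0 \<le> h t"
      using that(1) unfolding spherical_error_density_def by blast+
    from gb_stein_eq_prior_residual_ratio[OF this pr_nonneg prior_meas that(2)]
    show ?thesis
      using radial_moments_spherical[OF that(1)] by simp
  qed
  have "normal_generator TYPE('n) \<in> borel_measurable borel"
    unfolding normal_generator_def by measurable
  moreover have "\<And>t. 0 \<le> t \<Longrightarrow> 0 \<le> normal_generator TYPE('n) t"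
    by (simp add: normal_generator_def)
  ultimately have "gb_stein (normal_generator TYPE('n)) pr y X = prior_residual_ratio pr y X"
    using gb_stein_eq_prior_residual_ratio[OF _ _ pr_nonneg prior_meas fin_normal]
      radial_moments_normal_generator[OF \<open>2 \<le> CARD('n)\<close>]
    by blast
  then show ?thesis
    using spherical[OF f_dens fin_f] spherical[OF g_dens fin_g] by simp
qed

end
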